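(* Fix $p\in T^*\mathcal{Y}\setminus 0$. Let $\Sigma_p$ be the set of covectors $q\in T^*\mathcal{X}\setminus 0$ such that $(p,q)$ lies in the degenerate set $\Sigma$ of $\Lambda'$, and let $M_p=\{q\in T^*\mathcal{X}\setminus0: (p,q)\in\Lambda'\}$ be the set of mirror points associated to $p$. Then $M_p\setminus\Sigma_p$ consists of isolated covectors.
   Context: Setting (synthetic aperture radar model). $\gamma$ is a smooth embedded unit-speed curve in $\mathbb{R}^3$ (parameter $s$), $\Psi\subset\mathbb{R}^3$ a smooth embedded surface locally parametrized by $\psi(u,v)$, with $\mathrm{dist}(\Psi,\gamma)>0$; $c_0>0$ constant; $\mathcal{Y}=(s_1,s_2)\times(t_1,t_2)$, $\mathcal{X}=\{(u,v):\exists s\in(s_1,s_2),\ \tfrac{2}{c_0}|\psi(u,v)-\gamma(s)|\in(t_1,t_2)\}$. $R(u,v,s)=\psi(u,v)-\gamma(s)$, $\hat R=R/|R|$, and $\pi_{T\Psi}\hat R(u,v,s)$ is the projection of $\hat R$ onto the tangent plane of $\Psi$ at $\psi(u,v)$, written in components with respect to the coordinates $(u,v)$. Coordinates $(s,t,\sigma,\tau)$ on $T^*\mathcal{Y}$, $(u,v,\xi,\eta)$ on $T^*\mathcal{X}$. The canonical relation of the SAR forward operator is \[ \Lambda'=\Big\{(s,t,\sigma,\tau;u,v,\xi,\eta): t=\tfrac{2}{c_0}|R(u,v,s)|,\ \sigma=\tfrac{2\tau}{c_0}\hat R(u,v,s)\cdot\dot\gamma(s),\ (\xi,\eta)=\tfrac{2\tau}{c_0}\pi_{T\Psi}\hat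 R(u,v,s)\Big\}. \] Its degenerate set is $\Sigma=\Sigma_1\cup\Sigma_2$ with $\Sigma_1=\{\pi_{T\Psi}\hat R\parallel\nabla_{u,v}(\hat R\cdot\dot\gamma(s))\}\cap\Lambda'$ and $\Sigma_2=\{\pi_{T\Psi}\hat R\parallel\partial_s\pi_{T\Psi}\hat R\}\cap\Lambda'$; away from $\Sigma$, $\Lambda'$ is locally the graph of a diffeomorphism. *)

theory Defs
  imports "HOL-Analysis.Analysis"
begin

fun iter_dderiv :: "'a::real_normed_vector list \<Rightarrow> ('a \<Rightarrow> 'b::real_normed_vector) \<Rightarrow> 'a \<Rightarrow> 'b" where
  "iter_dderiv [] f = f"
| "iter_dderiv (w # ws) f = (\<lambda>x. frechet_derivative (iter_dderiv ws f) (at x) w)"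

definition smooth_on :: "'a::real_normed_vector set \<Rightarrow> ('a \<Rightarrow> 'b::real_normed_vector) \<Rightarrow> bool" where
  "smooth_on S f \<longleftrightarrow> open S \<and> (\<forall>ws. \<forall>x\<in>S. iter_dderiv ws f differentiable (at x))"

definition parallel2 :: "real \<times> real \<Rightarrow> real \<times> real \<Rightarrow> bool" where
  "parallel2 a b \<longleftrightarrow> (\<exists>\<alpha> \<beta>. (\<alpha>, \<beta>) \<noteq> (0, 0) \<and> \<alpha> *\<^sub>R a + \<beta> *\<^sub>R b = 0)"

definition Rvec :: "(real \<times> real \<Rightarrow> real^3) \<Rightarrow> (real \<Rightarrow> real^3) \<Rightarrow> real \<Rightarrow> real \<Rightarrow> real \<Rightarrow> real^3" where
  "Rvec \<psi> \<gamma> u v s = \<psi> (u, v) - \<gamma> s"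

definition Rhat :: "(real \<times> real \<Rightarrow> real^3) \<Rightarrow> (real \<Rightarrow> real^3) \<Rightarrow> real \<Rightarrow> real \<Rightarrow> real \<Rightarrow> real^3" where
  "Rhat \<psi> \<gamma> u v s = (1 / norm (Rvec \<psi> \<gamma> u v s)) *\<^sub>R Rvec \<psi> \<gamma> u v s"

definition psi_u :: "(real \<times> real \<Rightarrow> real^3) \<Rightarrow> real \<Rightarrow> real \<Rightarrow> real^3" where
  "psi_u \<psi> u v = frechet_derivative \<psi> (at (u, v)) (1, 0)"

definition psi_v :: "(real \<times> real \<Rightarrow> real^3) \<Rightarrow> real \<Rightarrow> real \<Rightarrow> real^3" where
  "psi_v \<psi> u v = frechet_derivative \<psi> (at (u, v)) (0, 1)"

text \<open>Tangential projection of Rhat onto T Psi, in components w.r.t. the coordinates (u,v)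
  (covector components: pairing with the coordinate vectors psi_u, psi_v).\<close>
definition projT :: "(real \<times> real \<Rightarrow> real^3) \<Rightarrow> (real \<Rightarrow> real^3) \<Rightarrow> real \<Rightarrow> real \<Rightarrow> real \<Rightarrow> real \<times> real" where
  "projT \<psi> \<gamma> u v s = (Rhat \<psi> \<gamma> u v s \<bullet> psi_u \<psi> u v, Rhat \<psi> \<gamma> u v s \<bullet> psi_v \<psi> u v)"

definition gdot :: "(real \<Rightarrow> real^3) \<Rightarrow> real \<Rightarrow> real^3" where
  "gdot \<gamma> s = vector_derivative \<gamma> (at s)"

definition grad_Rg :: "(real \<times> real \<Rightarrow> real^3) \<Rightarrow> (real \<Rightarrow> real^3) \<Rightarrow> real \<Rightarrow> real \<Rightarrow> real \<Rightarrow> real \<times> real" where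
  "grad_Rg \<psi> \<gamma> u v s =
     (let g = (\<lambda>(a, b). Rhat \<psi> \<gamma> a b s \<bullet> gdot \<gamma> s)
      in (frechet_derivative g (at (u, v)) (1, 0), frechet_derivative g (at (u, v)) (0, 1)))"

definition ds_projT :: "(real \<times> real \<Rightarrow> real^3) \<Rightarrow> (real \<Rightarrow> real^3) \<Rightarrow> real \<Rightarrow> real \<Rightarrow> real \<Rightarrow> real \<times> real" where
  "ds_projT \<psi> \<gamma> u v s = vector_derivative (\<lambda>r. projT \<psi> \<gamma> u v r) (at s)"

definition Ydom :: "real \<Rightarrow> real \<Rightarrow> real \<Rightarrow> real \<Rightarrow> (real \<times> real) set" where
  "Ydom s1 s2 t1 t2 = {s1<..<s2} \<times> {t1<..<t2}"

definition Xdom :: "(real \<times> real) set \<Rightarrow> (real \<times> real \<Rightarrow> real^3) \<Rightarrow> (real \<Rightarrow> real^3) \<Rightarrow> real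
                    \<Rightarrow> real \<Rightarrow> real \<Rightarrow> real \<Rightarrow> real \<Rightarrow> (real \<times> real) set" where
  "Xdom U \<psi> \<gamma> c0 s1 s2 t1 t2 =
     {(u, v). (u, v) \<in> U \<and> (\<exists>s\<in>{s1<..<s2}. 2 / c0 * norm (\<psi> (u, v) - \<gamma> s) \<in> {t1<..<t2})}"

definition Lambda' :: "(real \<times> real) set \<Rightarrow> (real \<times> real \<Rightarrow> real^3) \<Rightarrow> (real \<Rightarrow> real^3) \<Rightarrow> real
                    \<Rightarrow> real \<Rightarrow> real \<Rightarrow> real \<Rightarrow> real
                    \<Rightarrow> ((real \<times> real \<times> real \<times> real) \<times> (real \<times> real \<times> real \<times> real)) set" where
  "Lambda' U \<psi> \<gamma> c0 s1 s2 t1 t2 =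
     {((s, t, \<sigma>, \<tau>), (u, v, \<xi>, \<eta>)).
        (s, t) \<in> Ydom s1 s2 t1 t2 \<and> (u, v) \<in> Xdom U \<psi> \<gamma> c0 s1 s2 t1 t2 \<and>
        t = 2 / c0 * norm (Rvec \<psi> \<gamma> u v s) \<and>
        \<sigma> = 2 * \<tau> / c0 * (Rhat \<psi> \<gamma> u v s \<bullet> gdot \<gamma> s) \<and>
        (\<xi>, \<eta>) = (2 * \<tau> / c0) *\<^sub>R projT \<psi> \<gamma> u v s}"

definition Sigma1 where
  "Sigma1 U \<psi> \<gamma> c0 s1 s2 t1 t2 =
     {((s, t, \<sigma>, \<tau>), (u, v, \<xi>, \<eta>)). parallel2 (projT \<psi> \<gamma> u v s) (grad_Rg \<psi> \<gamma> u v s)}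
     \<inter> Lambda' U \<psi> \<gamma> c0 s1 s2 t1 t2"

definition Sigma2 where
  "Sigma2 U \<psi> \<gamma> c0 s1 s2 t1 t2 =
     {((s, t, \<sigma>, \<tau>), (u, v, \<xi>, \<eta>)). parallel2 (projT \<psi> \<gamma> u v s) (ds_projT \<psi> \<gamma> u v s)}
     \<inter> Lambda' U \<psi> \<gamma> c0 s1 s2 t1 t2"

definition SigmaDeg where
  "SigmaDeg U \<psi> \<gamma> c0 s1 s2 t1 t2 = Sigma1 U \<psi> \<gamma> c0 s1 s2 t1 t2 \<union> Sigma2 U \<psi> \<gamma> c0 s1 s2 t1 t2"

definition TstarY0 :: "real \<Rightarrow> real \<Rightarrow> real \<Rightarrow> real \<Rightarrow> (real \<times> real \<times> real \<times> real) set" where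
  "TstarY0 s1 s2 t1 t2 = {(s, t, \<sigma>, \<tau>). (s, t) \<in> Ydom s1 s2 t1 t2 \<and> (\<sigma>, \<tau>) \<noteq> (0, 0)}"

definition TstarX0 where
  "TstarX0 U \<psi> \<gamma> c0 s1 s2 t1 t2 =
     {(u, v, \<xi>, \<eta>). (u, v) \<in> Xdom U \<psi> \<gamma> c0 s1 s2 t1 t2 \<and> (\<xi>, \<eta>) \<noteq> ((0::real), (0::real))}"

definition mirror_pts where
  "mirror_pts U \<psi> \<gamma> c0 s1 s2 t1 t2 p =
     {q \<in> TstarX0 U \<psi> \<gamma> c0 s1 s2 t1 t2. (p, q) \<in> Lambda' U \<psi> \<gamma> c0 s1 s2 t1 t2}"

definition Sigma_fib where
  "Sigma_fib U \<psi> \<gamma> c0 s1 s2 t1 t2 p =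
     {q \<in> TstarX0 U \<psi> \<gamma> c0 s1 s2 t1 t2. (p, q) \<in> SigmaDeg U \<psi> \<gamma> c0 s1 s2 t1 t2}"

end

theory Submission
  imports Defs
begin

text \<open>Fix \<open>p = (s, t, \<sigma>, \<tau>)\<close>. A covector over \<open>(u, v)\<close> is a mirror point of \<open>p\<close> only if
  \<open>(u, v)\<close> solves the range--Doppler equations \<open>|R| = c\<^sub>0 t / 2\<close> and
  \<open>R/|R| \<bullet> \<gamma>'(s) = c\<^sub>0 \<sigma> / (2 \<tau>)\<close> (with \<open>R = R(u, v, s)\<close>), and then the covector itself
  is determined by \<open>(u, v)\<close>. The rows of the Jacobian of the range--Doppler map
  \<open>(u, v) \<mapsto> (|R|, R/|R| \<bullet> \<gamma>'(s))\<close> are \<open>\<pi>\<^sub>T\<^sub>\<Psi>(R/|R|)\<close> and \<open>\<nabla>\<^sub>u\<^sub>,\<^sub>v(R/|R| \<bullet> \<gamma>'(s))\<close>, so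
  off \<open>\<Sigma>\<^sub>1\<close> the Jacobian is invertible,
  the map is locally injective, and the solutions of the equations are isolated.\<close>

lemma not_islimpt_of_locally_injective_fibre:
  assumes f: "continuous (at x) f" and inj: "inj_on f S" and "x \<in> S"
    and const: "\<And>y. y \<in> S \<Longrightarrow> g (f y) = g (f x)"
    and isolated: "\<forall>\<^sub>F z in at (f x). g z \<noteq> g (f x)"
  shows "\<not> x islimpt S"
proof
  assume "x islimpt S"
  obtain V where V: "open V" "f x \<in> V" and gV: "\<And>z. z \<in> V \<Longrightarrow> z \<noteq> f x \<Longrightarrow> g z \<noteq> g (f x)"
    using isolated unfolding eventually_at_topological by blast
  obtain W where "open W" "x \<in> W" and fW: "\<And>y. y \<in> W \<Longrightarrow> f y \<in> V"
    using f V unfolding continuous_at_open by metis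
  then obtain y where "y \<in> S" "y \<in> W" "y \<noteq> x"
    using islimptE[OF \<open>x islimpt S\<close>] by metis
  then have "f y \<noteq> f x" using inj \<open>x \<in> S\<close> by (auto dest: inj_onD)
  then show False using gV fW \<open>y \<in> W\<close> const \<open>y \<in> S\<close> by blast
qed

lemma has_derivative_inj_eventually_neq:
  fixes f :: "'a::real_normed_vector \<Rightarrow> 'b::euclidean_space"
  assumes f: "(f has_derivative f') (at x)" and "inj f'"
  shows "\<forall>\<^sub>F y in at x. f y \<noteq> f x"
proof -
  obtain B where "B > 0" and B: "\<And>h. B * norm h \<le> norm (f' h)"
    using linear_inj_bounded_below_pos has_derivative_linear[OF f] \<open>inj f'\<close> by metis
  obtain d where "d > 0"
    and d: "\<And>y. norm (y - x) < d \<Longrightarrow> norm (f y - f x - f' (y - x)) \<le> B / 2 * norm (y - x)"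
    using f \<open>B > 0\<close> unfolding has_derivative_at_alt by (meson half_gt_zero)
  have "f y \<noteq> f x" if "y \<noteq> x" "dist y x < d" for y
  proof
    assume "f y = f x"
    then have "B * norm (y - x) \<le> B / 2 * norm (y - x)"
      using B[of "y - x"] d[of y] that by (simp add: dist_norm)
    then show False using \<open>B > 0\<close> \<open>y \<noteq> x\<close> by simp
  qed
  then show ?thesis unfolding eventually_at using \<open>d > 0\<close> by blast
qed

lemma parallel2_iff_det: "parallel2 (a1, a2) (b1, b2) \<longleftrightarrow> a1 * b2 = a2 * b1"
proof
  assume "parallel2 (a1, a2) (b1, b2)"
  then obtain \<alpha> \<beta> where "(\<alpha>, \<beta>) \<noteq> (0, 0)" "\<alpha> * a1 + \<beta> * b1 = 0" "\<alpha> * a2 + \<beta> * b2 = 0"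
    unfolding parallel2_def by (auto simp: zero_prod_def)
  moreover have "\<alpha> * (a1 * b2 - a2 * b1) = 0" "\<beta> * (a1 * b2 - a2 * b1) = 0"
    using \<open>\<alpha> * a1 + \<beta> * b1 = 0\<close> \<open>\<alpha> * a2 + \<beta> * b2 = 0\<close> by algebra+
  ultimately show "a1 * b2 = a2 * b1" by auto
next
  assume "a1 * b2 = a2 * b1"
  show "parallel2 (a1, a2) (b1, b2)"
  proof (cases "b1 = 0 \<and> b2 = 0")
    case True
    then show ?thesis
      unfolding parallel2_def by (intro exI[of _ "0::real"] exI[of _ "1::real"]) (simp add: zero_prod_def)
  next
    case False
    then have "b1 * b1 + b2 * b2 \<noteq> 0" by (simp add: sum_squares_eq_zero_iff)
    moreover have "(b1 * b1 + b2 * b2) * a1 - (a1 * b1 + a2 * b2) * b1 = 0"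
      and "(b1 * b1 + b2 * b2) * a2 - (a1 * b1 + a2 * b2) * b2 = 0"
      using \<open>a1 * b2 = a2 * b1\<close> by algebra+
    ultimately have "(b1 * b1 + b2 * b2, -(a1 * b1 + a2 * b2)) \<noteq> (0, 0) \<and>
        (b1 * b1 + b2 * b2) *\<^sub>R (a1, a2) + (-(a1 * b1 + a2 * b2)) *\<^sub>R (b1, b2) = 0"
      by (auto simp: zero_prod_def algebra_simps)
    then show ?thesis unfolding parallel2_def by blast
  qed
qed

lemma inj_linear_pair_if_det_nonzero:
  fixes A B :: "real \<times> real \<Rightarrow> real"
  assumes "linear A" "linear B" and det: "A (1, 0) * B (0, 1) \<noteq> A (0, 1) * B (1, 0)"
  shows "inj (\<lambda>h. (A h, B h))"
proof -
  have coords: "C (x, y) = x * C (1, 0) + y * C (0, 1)" if "linear C" for C :: "real \<times> real \<Rightarrow> real" and x y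
  proof -
    have "C (x, y) = C (x *\<^sub>R (1, 0) + y *\<^sub>R (0, 1))" by simp
    also have "\<dots> = x * C (1, 0) + y * C (0, 1)"
      by (simp only: linear_add[OF that] linear_scale[OF that] real_scaleR_def)
    finally show ?thesis .
  qed
  have "linear (\<lambda>h. (A h, B h))"
    using assms(1,2) by (simp add: linear_iff)
  moreover have "h = 0" if "A h = 0" "B h = 0" for h
  proof (cases h)
    case (Pair x y)
    have "x * A (1, 0) + y * A (0, 1) = 0" "x * B (1, 0) + y * B (0, 1) = 0"
      using that unfolding Pair coords[OF assms(1), of x y] coords[OF assms(2), of x y] .
    then have "x * (A (1, 0) * B (0, 1) - A (0, 1) * B (1, 0)) = 0"
      and "y * (A (1, 0) * B (0, 1) - A (0, 1) * B (1, 0)) = 0"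
      by algebra+
    then show ?thesis using det Pair by (simp add: zero_prod_def)
  qed
  ultimately show ?thesis by (simp add: linear_injective_0 zero_prod_def)
qed

definition range_doppler :: "(real \<times> real \<Rightarrow> real^3) \<Rightarrow> (real \<Rightarrow> real^3) \<Rightarrow> real \<Rightarrow> real \<times> real \<Rightarrow> real \<times> real"
  where "range_doppler \<psi> \<gamma> s = (\<lambda>(u, v). (norm (Rvec \<psi> \<gamma> u v s), Rhat \<psi> \<gamma> u v s \<bullet> gdot \<gamma> s))"

lemma range_doppler_locally_injective:
  assumes "\<psi> differentiable (at (u, v))" and "\<psi> (u, v) \<noteq> \<gamma> s"
    and "\<not> parallel2 (projT \<psi> \<gamma> u v s) (grad_Rg \<psi> \<gamma> u v s)"
  shows "\<forall>\<^sub>F x in at (u, v). range_doppler \<psi> \<gamma> s x \<noteq> range_doppler \<psi> \<gamma> s (u, v)"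
proof -
  define r where "r = (\<lambda>x. \<psi> x - \<gamma> s)"
  define D where "D = frechet_derivative \<psi> (at (u, v))"
  define doppler where "doppler = (\<lambda>(a, b). Rhat \<psi> \<gamma> a b s \<bullet> gdot \<gamma> s)"
  define R' where "R' = (\<lambda>h. D h \<bullet> sgn (r (u, v)))"
  define G' where "G' = frechet_derivative doppler (at (u, v))"
  have r0: "r (u, v) \<noteq> 0" using assms(2) by (simp add: r_def)
  have r: "(r has_derivative D) (at (u, v))"
    unfolding r_def D_def using assms(1) frechet_derivative_works
    by (auto intro!: derivative_eq_intros)
  have R: "((\<lambda>x. norm (r x)) has_derivative R') (at (u, v))"
    unfolding R'_def using has_derivative_compose[OF r has_derivative_norm[OF r0]] by simp
  have "doppler = (\<lambda>x. ((1 / norm (r x)) *\<^sub>R r x) \<bullet> gdot \<gamma> s)"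
    by (auto simp: doppler_def Rhat_def Rvec_def r_def)
  moreover have "r differentiable (at (u, v))" "(\<lambda>x. norm (r x)) differentiable (at (u, v))"
    using r R by (auto intro: differentiableI)
  ultimately have "doppler differentiable (at (u, v))"
    using r0 by (simp only:) (intro differentiable_inner differentiable_scaleR differentiable_divide
        differentiable_const; simp)
  then have G: "(doppler has_derivative G') (at (u, v))"
    unfolding G'_def using frechet_derivative_works by blast
  have "range_doppler \<psi> \<gamma> s = (\<lambda>x. (norm (r x), doppler x))"
    by (auto simp: range_doppler_def doppler_def r_def Rvec_def)
  then have deriv: "(range_doppler \<psi> \<gamma> s has_derivative (\<lambda>h. (R' h, G' h))) (at (u, v))"
    using has_derivative_Pair[OF R G] by simp
  have "projT \<psi> \<gamma> u v s = (R' (1, 0), R' (0, 1))"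
    by (simp add: projT_def R'_def Rhat_def psi_u_def psi_v_def D_def r_def Rvec_def
        sgn_div_norm inner_commute divide_inverse)
  moreover have "grad_Rg \<psi> \<gamma> u v s = (G' (1, 0), G' (0, 1))"
    by (simp add: grad_Rg_def G'_def doppler_def Let_def)
  ultimately have "inj (\<lambda>h. (R' h, G' h))"
    using assms(3) has_derivative_linear[OF R] has_derivative_linear[OF G]
    by (auto simp: parallel2_iff_det intro: inj_linear_pair_if_det_nonzero)
  with deriv show ?thesis by (rule has_derivative_inj_eventually_neq)
qed

lemma mirror_pts_solve_range_doppler:
  assumes "c0 > 0" and "q \<in> mirror_pts U \<psi> \<gamma> c0 s1 s2 t1 t2 (s, t, \<sigma>, \<tau>)"
  shows "range_doppler \<psi> \<gamma> s (fst q, fst (snd q)) = (c0 * t / 2, c0 * \<sigma> / (2 * \<tau>))"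
    and "snd (snd q) = (2 * \<tau> / c0) *\<^sub>R projT \<psi> \<gamma> (fst q) (fst (snd q)) s"
proof -
  obtain u v \<xi> \<eta> where q: "q = (u, v, \<xi>, \<eta>)" by (cases q) auto
  have eqs: "t = 2 / c0 * norm (Rvec \<psi> \<gamma> u v s)"
    "\<sigma> = 2 * \<tau> / c0 * (Rhat \<psi> \<gamma> u v s \<bullet> gdot \<gamma> s)"
    "(\<xi>, \<eta>) = (2 * \<tau> / c0) *\<^sub>R projT \<psi> \<gamma> u v s"
    using assms(2) by (auto simp: q mirror_pts_def Lambda'_def)
  moreover have "\<tau> \<noteq> 0"
    using assms(2) eqs(3) by (auto simp: q mirror_pts_def TstarX0_def zero_prod_def)
  ultimately show "range_doppler \<psi> \<gamma> s (fst q, fst (snd q)) = (c0 * t / 2, c0 * \<sigma> / (2 * \<tau>))"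
    and "snd (snd q) = (2 * \<tau> / c0) *\<^sub>R projT \<psi> \<gamma> (fst q) (fst (snd q)) s"
    using \<open>c0 > 0\<close> by (simp_all add: q range_doppler_def)
qed

lemma mirror_pts_diff_Sigma_fibD:
  assumes "(u, v, \<xi>, \<eta>) \<in> mirror_pts U \<psi> \<gamma> c0 s1 s2 t1 t2 (s, t, \<sigma>, \<tau>)
                             - Sigma_fib U \<psi> \<gamma> c0 s1 s2 t1 t2 (s, t, \<sigma>, \<tau>)"
  shows "(u, v) \<in> U" and "\<not> parallel2 (projT \<psi> \<gamma> u v s) (grad_Rg \<psi> \<gamma> u v s)"
proof -
  have "(u, v, \<xi>, \<eta>) \<in> TstarX0 U \<psi> \<gamma> c0 s1 s2 t1 t2"
    and "((s, t, \<sigma>, \<tau>), (u, v, \<xi>, \<eta>)) \<in> Lambda' U \<psi> \<gamma> c0 s1 s2 t1 t2"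
    and "((s, t, \<sigma>, \<tau>), (u, v, \<xi>, \<eta>)) \<notin> Sigma1 U \<psi> \<gamma> c0 s1 s2 t1 t2"
    using assms by (simp_all add: mirror_pts_def Sigma_fib_def SigmaDeg_def)
  then show "(u, v) \<in> U" and "\<not> parallel2 (projT \<psi> \<gamma> u v s) (grad_Rg \<psi> \<gamma> u v s)"
    by (simp_all add: TstarX0_def Xdom_def Sigma1_def)
qed

theorem proposition3:
  fixes \<gamma> :: "real \<Rightarrow> real^3" and \<psi> :: "real \<times> real \<Rightarrow> real^3"
    and U :: "(real \<times> real) set"
    and c0 s1 s2 t1 t2 :: real
    and p :: "real \<times> real \<times> real \<times> real"
  assumes gamma_smooth: "smooth_on UNIV \<gamma>"
    and gamma_unit: "\<And>s. norm (vector_derivative \<gamma> (at s)) = 1"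
    and gamma_embedded: "\<exists>g. homeomorphism UNIV (range \<gamma>) \<gamma> g"
    and psi_smooth: "smooth_on U \<psi>"
    and psi_immersion: "\<And>x. x \<in> U \<Longrightarrow> inj (frechet_derivative \<psi> (at x))"
    and psi_embedded: "\<exists>g. homeomorphism U (\<psi> ` U) \<psi> g"
    and dist_pos: "setdist (\<psi> ` U) (range \<gamma>) > 0"
    and c0_pos: "c0 > 0"
    and p_in: "p \<in> TstarY0 s1 s2 t1 t2"
  shows "\<forall>q \<in> mirror_pts U \<psi> \<gamma> c0 s1 s2 t1 t2 p - Sigma_fib U \<psi> \<gamma> c0 s1 s2 t1 t2 p.
           \<not> q islimpt (mirror_pts U \<psi> \<gamma> c0 s1 s2 t1 t2 p - Sigma_fib U \<psi> \<gamma> c0 s1 s2 t1 t2 p)"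
proof
  let ?S = "mirror_pts U \<psi> \<gamma> c0 s1 s2 t1 t2 p - Sigma_fib U \<psi> \<gamma> c0 s1 s2 t1 t2 p"
  fix q assume "q \<in> ?S"
  obtain s t \<sigma> \<tau> where p: "p = (s, t, \<sigma>, \<tau>)" by (cases p) auto
  obtain u v \<xi> \<eta> where q: "q = (u, v, \<xi>, \<eta>)" by (cases q) auto
  note uv = mirror_pts_diff_Sigma_fibD[OF \<open>q \<in> ?S\<close>[unfolded p q]]
  have "\<psi> differentiable (at (u, v))"
    using psi_smooth uv(1) iter_dderiv.simps(1) unfolding smooth_on_def by metis
  moreover have "\<psi> (u, v) \<noteq> \<gamma> s"
    using dist_pos setdist_le_dist[of "\<psi> (u, v)" "\<psi> ` U" "\<gamma> s" "range \<gamma>"] uv(1) by force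
  ultimately have isolated: "\<forall>\<^sub>F x in at (u, v). range_doppler \<psi> \<gamma> s x \<noteq> range_doppler \<psi> \<gamma> s (u, v)"
    using uv(2) by (rule range_doppler_locally_injective)
  let ?base = "\<lambda>q :: real \<times> real \<times> real \<times> real. (fst q, fst (snd q))"
  have mirror: "q' \<in> mirror_pts U \<psi> \<gamma> c0 s1 s2 t1 t2 (s, t, \<sigma>, \<tau>)" if "q' \<in> ?S" for q'
    using that p by simp
  have "inj_on ?base ?S"
  proof (rule inj_onI)
    fix q1 q2 assume "q1 \<in> ?S" "q2 \<in> ?S" and "?base q1 = ?base q2"
    then show "q1 = q2"
      using mirror_pts_solve_range_doppler(2)[OF c0_pos mirror] by (simp add: prod_eq_iff)
  qed
  moreover have "range_doppler \<psi> \<gamma> s (?base q') = range_doppler \<psi> \<gamma> s (?base q)" if "q' \<in> ?S" for q'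
    using mirror_pts_solve_range_doppler(1)[OF c0_pos mirror] that \<open>q \<in> ?S\<close> by simp
  ultimately show "\<not> q islimpt ?S"
    using \<open>q \<in> ?S\<close> isolated unfolding q
    by (intro not_islimpt_of_locally_injective_fibre[where f = ?base and g = "range_doppler \<psi> \<gamma> s"])
       (auto intro: continuous_intros)
qed

end
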